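(* In every run of the algorithm described in the context in which at most $t$ processes crash, if the writer $p_w$ does not crash during an invocation of $\mathsf{write}()$, then this invocation terminates.
   Context: Model. There are $n$ asynchronous processes $p_1,\dots,p_n$, of which up to $t<n/2$ may crash; a process runs its algorithm correctly until it crashes, and a process that never crashes is correct. Each ordered pair of processes is linked by a reliable (no loss, corruption, duplication or creation; every message sent to a correct process is eventually received), asynchronous, not necessarily FIFO channel. $p_w$ is the single writer, invoking writes sequentially; $v_0$ is the initial value. Messages: $\textsc{write}(b,v)$ with $b\in\{0,1\}$, which stands for the two types $\textsc{write0}(v)$ and $\textsc{write1}(v)$; $\textsc{read}()$; $\textsc{proceed}()$. Variables of $p_i$. These are: $history_i$ with $history_i[0]=v_0$; $w\_sync_i[1..n]$, initially all $0$; $r\_sync_i[1..n]$, initially all $0$. $\mathsf{write}(v)$ by $p_w$: $wsn\gets w\_sync_w[w]+1$; $w\_sync_w[w]\gets wsn$; $history_w[wsn]\gets v$. Send $\textsc{write}(wsn\bmod 2,v)$ to each $p_j$ with $w\_sync_w[j]=wsn-1$. Wait until at least $n-t$ indices $j$ have $w\_sync_w[j]=wsn$. Return. $\mathsf{read}()$ by $p_i$: $r\_sync_i[i]\gets r\_sync_i[i]+1$ and call the new value $rsn$. Send $\textsc{read}()$ to all $p_j$ with $j\ne i$. Wait until at least $n-t$ indices $j$ have $r\_sync_i[j]=rsn$. Let $sn\gets w\_sync_i[i]$. Wait until at least $n-t$ indices $j$ have $w\_sync_i[j]\ge sn$. Return $history_i[sn]$. On receipt of $\textsc{write}(b,v)$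 from $p_j$ at $p_i$: Wait until $b=(w\_sync_i[j]+1)\bmod 2$. Let $wsn\gets w\_sync_i[j]+1$. If $wsn=w\_sync_i[i]+1$, then set $w\_sync_i[i]\gets wsn$ and $history_i[wsn]\gets v$, and send $\textsc{write}(wsn\bmod 2,v)$ to each $p_\ell$ with $w\_sync_i[\ell]=wsn-1$. Else, if $wsn<w\_sync_i[i]$, send $\textsc{write}((wsn+1)\bmod 2,history_i[wsn+1])$ to $p_j$. Finally set $w\_sync_i[j]\gets wsn$. On receipt of $\textsc{read}()$ from $p_j$ at $p_i$: Let $sn\gets w\_sync_i[i]$; wait until $w\_sync_i[j]\ge sn$; send $\textsc{proceed}()$ to $p_j$. On receipt of $\textsc{proceed}()$ from $p_j$ at $p_i$: $r\_sync_i[j]\gets r\_sync_i[j]+1$. Message handlers run concurrently; a waiting handler does not block the reception of other messages. *)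

theory Defs
  imports Main "HOL-Library.Multiset"
begin

text \<open>Processes are indexed by 1..n (only those indices
are meaningful).  Waiting statements are modelled as guarded atomic steps.\<close>

datatype 'v msg = WriteM nat 'v | ReadM | ProceedM
  (* WriteM b v with b in {0,1} stands for write0(v) / write1(v) *)

datatype 'v handler =
    HWrite nat nat 'v   (* pending handler of write(b,v) received from p_j: HWrite j b v *)
  | HRead nat nat       (* pending handler of read() received from p_j, with sn read at receipt *)

datatype opstate =
    NoOp
  | WOp nat       (* write pending, waiting for acks of wsn *)
  | ROp1 nat      (* read pending, first wait, with rsn *)
  | ROp2 nat      (* read pending, second wait, with sn *)

record 'v lstate =
  hist   :: "nat \<Rightarrow> 'v"
  wsync  :: "nat \<Rightarrow> nat"
  rsync  :: "nat \<Rightarrow> nat"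
  pend   :: "'v handler multiset"
  op     :: opstate
  crashed :: bool

record 'v gstate =
  procs :: "nat \<Rightarrow> 'v lstate"
  chan  :: "(nat \<times> nat \<times> 'v msg) multiset"   (* in-transit messages (source, destination, message) *)

datatype 'v action =
    InvWrite 'v
  | InvRead nat
  | OpStep nat           (* process i passes the wait statement of its pending operation *)
  | Deliver nat nat "'v msg"   (* reception of a message (src, dst, m) *)
  | Exec nat "'v handler"      (* process i executes a pending handler whose wait is satisfied *)
  | Crash nat
  | Stutter

definition send_to :: "nat \<Rightarrow> nat set \<Rightarrow> 'v msg \<Rightarrow> (nat \<times> nat \<times> 'v msg) multiset" where
  "send_to i D m = image_mset (\<lambda>l. (i, l, m)) (mset_set D)"

definition upd_proc :: "nat \<Rightarrow> ('v lstate \<Rightarrow> 'v lstate) \<Rightarrow> 'v gstate \<Rightarrow> 'v gstate" where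
  "upd_proc i f s = s\<lparr>procs := (procs s)(i := f (procs s i))\<rparr>"

definition initial :: "nat \<Rightarrow> 'v \<Rightarrow> 'v gstate \<Rightarrow> bool" where
  "initial n v0 s \<longleftrightarrow> chan s = {#} \<and>
     (\<forall>i\<in>{1..n}. hist (procs s i) 0 = v0 \<and> wsync (procs s i) = (\<lambda>_. 0) \<and>
        rsync (procs s i) = (\<lambda>_. 0) \<and> pend (procs s i) = {#} \<and>
        op (procs s i) = NoOp \<and> \<not> crashed (procs s i))"

fun enabled :: "nat \<Rightarrow> nat \<Rightarrow> nat \<Rightarrow> 'v gstate \<Rightarrow> 'v action \<Rightarrow> bool" where
  "enabled n t w s (InvWrite v) \<longleftrightarrow> \<not> crashed (procs s w) \<and> op (procs s w) = NoOp"
| "enabled n t w s (InvRead i) \<longleftrightarrow> i \<in> {1..n} \<and> \<not> crashed (procs s i) \<and> op (procs s i) = NoOp"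
| "enabled n t w s (OpStep i) \<longleftrightarrow> i \<in> {1..n} \<and> \<not> crashed (procs s i) \<and>
     (case op (procs s i) of
        NoOp \<Rightarrow> False
      | WOp wsn \<Rightarrow> card {j\<in>{1..n}. wsync (procs s i) j = wsn} \<ge> n - t
      | ROp1 rsn \<Rightarrow> card {j\<in>{1..n}. rsync (procs s i) j = rsn} \<ge> n - t
      | ROp2 sn \<Rightarrow> card {j\<in>{1..n}. wsync (procs s i) j \<ge> sn} \<ge> n - t)"
| "enabled n t w s (Deliver src dst m) \<longleftrightarrow> (src, dst, m) \<in># chan s \<and> \<not> crashed (procs s dst)"
| "enabled n t w s (Exec i h) \<longleftrightarrow> i \<in> {1..n} \<and> \<not> crashed (procs s i) \<and> h \<in># pend (procs s i) \<and>
     (case h of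
        HWrite j b v \<Rightarrow> b = (wsync (procs s i) j + 1) mod 2
      | HRead j sn \<Rightarrow> wsync (procs s i) j \<ge> sn)"
| "enabled n t w s (Crash i) \<longleftrightarrow> i \<in> {1..n} \<and> \<not> crashed (procs s i)"
| "enabled n t w s Stutter \<longleftrightarrow> True"

fun effect :: "nat \<Rightarrow> nat \<Rightarrow> nat \<Rightarrow> 'v gstate \<Rightarrow> 'v action \<Rightarrow> 'v gstate" where
  "effect n t w s (InvWrite v) =
     (let p = procs s w; wsn = wsync p w + 1;
          p' = p\<lparr>wsync := (wsync p)(w := wsn), hist := (hist p)(wsn := v), op := WOp wsn\<rparr>
      in s\<lparr>procs := (procs s)(w := p'),
           chan := chan s + send_to w {j\<in>{1..n}. wsync p' j = wsn - 1} (WriteM (wsn mod 2) v)\<rparr>)"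
| "effect n t w s (InvRead i) =
     (let p = procs s i; rsn = rsync p i + 1;
          p' = p\<lparr>rsync := (rsync p)(i := rsn), op := ROp1 rsn\<rparr>
      in s\<lparr>procs := (procs s)(i := p'),
           chan := chan s + send_to i {j\<in>{1..n}. j \<noteq> i} ReadM\<rparr>)"
| "effect n t w s (OpStep i) =
     upd_proc i (\<lambda>p. case op p of
        ROp1 rsn \<Rightarrow> p\<lparr>op := ROp2 (wsync p i)\<rparr>
      | _ \<Rightarrow> p\<lparr>op := NoOp\<rparr>) s"
| "effect n t w s (Deliver src dst m) =
     (let s1 = s\<lparr>chan := chan s - {#(src, dst, m)#}\<rparr> in
      case m of
        WriteM b v \<Rightarrow> upd_proc dst (\<lambda>p. p\<lparr>pend := add_mset (HWrite src b v) (pend p)\<rparr>) s1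
      | ReadM \<Rightarrow> upd_proc dst (\<lambda>p. p\<lparr>pend := add_mset (HRead src (wsync p dst)) (pend p)\<rparr>) s1
      | ProceedM \<Rightarrow> upd_proc dst (\<lambda>p. p\<lparr>rsync := (rsync p)(src := rsync p src + 1)\<rparr>) s1)"
| "effect n t w s (Exec i h) =
     (let p0 = procs s i; p = p0\<lparr>pend := pend p0 - {#h#}\<rparr> in
      case h of
        HWrite j b v \<Rightarrow>
          (let wsn = wsync p j + 1 in
           if wsn = wsync p i + 1 then
             (let p' = p\<lparr>wsync := (wsync p)(i := wsn), hist := (hist p)(wsn := v)\<rparr>
              in s\<lparr>procs := (procs s)(i := p'\<lparr>wsync := (wsync p')(j := wsn)\<rparr>),
                   chan := chan s + send_to i {l\<in>{1..n}. wsync p' l = wsn - 1} (WriteM (wsn mod 2) v)\<rparr>)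
           else if wsn < wsync p i then
             s\<lparr>procs := (procs s)(i := p\<lparr>wsync := (wsync p)(j := wsn)\<rparr>),
               chan := chan s + {#(i, j, WriteM ((wsn + 1) mod 2) (hist p (wsn + 1)))#}\<rparr>
           else
             s\<lparr>procs := (procs s)(i := p\<lparr>wsync := (wsync p)(j := wsn)\<rparr>)\<rparr>)
      | HRead j sn \<Rightarrow>
          s\<lparr>procs := (procs s)(i := p), chan := chan s + {#(i, j, ProceedM)#}\<rparr>)"
| "effect n t w s (Crash i) = upd_proc i (\<lambda>p. p\<lparr>crashed := True\<rparr>) s"
| "effect n t w s Stutter = s"

definition step :: "nat \<Rightarrow> nat \<Rightarrow> nat \<Rightarrow> 'v gstate \<Rightarrow> 'v action \<Rightarrow> 'v gstate \<Rightarrow> bool" where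
  "step n t w s a s' \<longleftrightarrow> enabled n t w s a \<and> s' = effect n t w s a"

text \<open>Actions subject to (weak) fairness: message receptions (reliable channels) and
local steps of processes (handlers and operation code).  Invocations, crashes and
stuttering are not forced.\<close>
fun fair_action :: "'v action \<Rightarrow> bool" where
  "fair_action (Deliver _ _ _) = True"
| "fair_action (Exec _ _) = True"
| "fair_action (OpStep _) = True"
| "fair_action _ = False"

definition is_run :: "nat \<Rightarrow> nat \<Rightarrow> nat \<Rightarrow> 'v \<Rightarrow> (nat \<Rightarrow> 'v gstate) \<Rightarrow> (nat \<Rightarrow> 'v action) \<Rightarrow> bool" where
  "is_run n t w v0 \<sigma> act \<longleftrightarrow>
     initial n v0 (\<sigma> 0) \<and> (\<forall>k. step n t w (\<sigma> k) (act k) (\<sigma> (Suc k)))"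

definition weakly_fair :: "nat \<Rightarrow> nat \<Rightarrow> nat \<Rightarrow> (nat \<Rightarrow> 'v gstate) \<Rightarrow> (nat \<Rightarrow> 'v action) \<Rightarrow> bool" where
  "weakly_fair n t w \<sigma> act \<longleftrightarrow>
     (\<forall>a k. fair_action a \<and> (\<forall>k'\<ge>k. enabled n t w (\<sigma> k') a) \<longrightarrow> (\<exists>k'\<ge>k. act k' = a))"

definition faulty :: "nat \<Rightarrow> (nat \<Rightarrow> 'v gstate) \<Rightarrow> nat set" where
  "faulty n \<sigma> = {i\<in>{1..n}. \<exists>k. crashed (procs (\<sigma> k) i)}"

end

theory Submission
  imports Defs
begin

text \<open>
  A write with sequence number wsn returns once w_sync_w[j] = wsn for n - t indices j, so it
  suffices that this happens for every correct p_j.  The heart of the proof is an invariant for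
  each ordered pair of processes (i, j): the writes of p_i travelling to p_j, still in the channel
  or received but not yet handled, are exactly those numbered w_sync_j[i] + 1, ...,
  min w_sync_i[i] (w_sync_i[j] + 1), each tagged with its parity.  All counters only grow and
  are bounded by wsn while the write is pending, hence they stabilise.  If w_sync_w[j] stabilised
  below wsn, the invariant for (w, j) or for (j, w) would exhibit a message whose parity is the
  one its receiver waits for; fairness delivers and handles it, and a stabilised counter grows.
\<close>

section \<open>Parities of writes in transit\<close>

abbreviation sync :: "'v gstate \<Rightarrow> nat \<Rightarrow> nat \<Rightarrow> nat" where
  "sync s i j \<equiv> wsync (procs s i) j"

fun write_bit :: "'v msg \<Rightarrow> nat multiset" where
  "write_bit (WriteM b v) = {#b#}"
| "write_bit ReadM = {#}"
| "write_bit ProceedM = {#}"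

fun handler_bit :: "nat \<Rightarrow> 'v handler \<Rightarrow> nat multiset" where
  "handler_bit a (HWrite j b v) = (if j = a then {#b#} else {#})"
| "handler_bit a (HRead j sn) = {#}"

definition chan_bits :: "(nat \<times> nat \<times> 'v msg) multiset \<Rightarrow> nat \<Rightarrow> nat \<Rightarrow> nat multiset" where
  "chan_bits C a b = \<Sum>\<^sub># (image_mset (\<lambda>(p, q, m). if p = a \<and> q = b then write_bit m else {#}) C)"

definition pend_bits :: "'v handler multiset \<Rightarrow> nat \<Rightarrow> nat multiset" where
  "pend_bits P a = \<Sum>\<^sub># (image_mset (handler_bit a) P)"

definition in_transit :: "'v gstate \<Rightarrow> nat \<Rightarrow> nat \<Rightarrow> nat multiset" where
  "in_transit s a b = chan_bits (chan s) a b + pend_bits (pend (procs s b)) a"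

lemma chan_bits_empty [simp]: "chan_bits {#} a b = {#}"
  by (simp add: chan_bits_def)

lemma chan_bits_union [simp]: "chan_bits (C + D) a b = chan_bits C a b + chan_bits D a b"
  by (simp add: chan_bits_def)

lemma chan_bits_add_mset [simp]:
  "chan_bits (add_mset (p, q, m) C) a b = (if p = a \<and> q = b then write_bit m else {#}) + chan_bits C a b"
  by (simp add: chan_bits_def)

lemma chan_bits_remove:
  "(p, q, m) \<in># C \<Longrightarrow>
     chan_bits (C - {#(p, q, m)#}) a b = chan_bits C a b - (if p = a \<and> q = b then write_bit m else {#})"
  by (metis add_diff_cancel_left' chan_bits_add_mset insert_DiffM)

lemma chan_bits_send_to [simp]:
  assumes "finite D"
  shows "chan_bits (send_to i D m) a b = (if i = a \<and> b \<in> D then write_bit m else {#})"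
proof -
  have "chan_bits (send_to i D m) a b = (\<Sum>l\<in>D. if i = a \<and> l = b then write_bit m else {#})"
    by (simp add: chan_bits_def send_to_def image_mset.compositionality o_def sum_unfold_sum_mset)
  also have "(\<Sum>l\<in>D. if i = a \<and> l = b then write_bit m else {#}) = (if i = a \<and> b \<in> D then write_bit m else {#})"
    using assms by (cases "i = a") (simp_all add: sum.delta')
  finally show ?thesis .
qed

lemma pend_bits_add_mset [simp]: "pend_bits (add_mset h P) a = handler_bit a h + pend_bits P a"
  by (simp add: pend_bits_def)

lemma pend_bits_remove: "h \<in># P \<Longrightarrow> pend_bits (P - {#h#}) a = pend_bits P a - handler_bit a h"
  by (metis add_diff_cancel_left' pend_bits_add_mset insert_DiffM)

definition seq_bits :: "nat \<Rightarrow> nat \<Rightarrow> nat multiset" where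
  "seq_bits lo hi = mset (map (\<lambda>k. k mod 2) [Suc lo..<Suc hi])"

lemma seq_bits_Suc_right: "lo \<le> hi \<Longrightarrow> seq_bits lo (Suc hi) = add_mset (Suc hi mod 2) (seq_bits lo hi)"
  by (simp add: seq_bits_def)

lemma seq_bits_Suc_left: "lo < hi \<Longrightarrow> seq_bits lo hi = add_mset (Suc lo mod 2) (seq_bits (Suc lo) hi)"
  by (simp add: seq_bits_def upt_rec)

lemma seq_bits_empty: "hi \<le> lo \<Longrightarrow> seq_bits lo hi = {#}"
  by (simp add: seq_bits_def)

lemma seq_bits_nonempty: "x \<in># seq_bits lo hi \<Longrightarrow> lo < hi"
  by (cases "hi \<le> lo") (auto simp: seq_bits_empty)

text \<open>
  For processes p_i and p_j, the window holds with A = w_sync_i[i], x = w_sync_i[j],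
  y = w_sync_j[i] and T = in_transit s i j: the writes of p_i in transit to p_j are exactly
  those numbered y + 1, ..., min A (x + 1).
\<close>

definition sync_window :: "nat \<Rightarrow> nat \<Rightarrow> nat \<Rightarrow> nat multiset \<Rightarrow> bool" where
  "sync_window A x y T \<longleftrightarrow> x \<le> A \<and> y \<le> A \<and> y \<le> Suc x \<and> T = seq_bits y (min A (Suc x))"

lemma sync_window_issue:
  "sync_window A x y T \<Longrightarrow> sync_window (Suc A) x y (T + (if x = A then {#Suc A mod 2#} else {#}))"
  by (cases "x = A") (auto simp: sync_window_def min_absorb1 min_absorb2 seq_bits_Suc_right)

lemma sync_window_ack:
  "sync_window A x y T \<Longrightarrow> x < A \<Longrightarrow>
     sync_window A (Suc x) y (T + (if Suc x < A then {#Suc (Suc x) mod 2#} else {#}))"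
  by (cases "Suc x < A")
    (auto simp: sync_window_def min_absorb1 min_absorb2 seq_bits_Suc_right simp del: mod2_Suc_Suc)

lemma sync_window_receivable: "sync_window A x y T \<Longrightarrow> b \<in># T \<Longrightarrow> y < A \<and> y \<le> x"
  by (auto simp: sync_window_def dest: seq_bits_nonempty)

lemma sync_window_receive:
  "sync_window A x y T \<Longrightarrow> Suc y mod 2 \<in># T \<Longrightarrow> sync_window A x (Suc y) (T - {#Suc y mod 2#})"
  by (auto simp: sync_window_def dest: seq_bits_nonempty simp: seq_bits_Suc_left)
lemma sync_window_next_bit: "sync_window A x y T \<Longrightarrow> y < min A (Suc x) \<Longrightarrow> Suc y mod 2 \<in># T"
  by (simp add: sync_window_def seq_bits_Suc_left)

section \<open>The synchronisation invariant\<close>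

fun handler_src :: "'v handler \<Rightarrow> nat" where
  "handler_src (HWrite j b v) = j"
| "handler_src (HRead j sn) = j"

definition chan_wf :: "nat \<Rightarrow> 'v gstate \<Rightarrow> bool" where
  "chan_wf n s \<longleftrightarrow> (\<forall>(p, q, m)\<in>#chan s. p \<in> {1..n} \<and> q \<in> {1..n} \<and> p \<noteq> q)"

definition pend_wf :: "nat \<Rightarrow> 'v gstate \<Rightarrow> bool" where
  "pend_wf n s \<longleftrightarrow> (\<forall>i\<in>{1..n}. \<forall>h\<in>#pend (procs s i). handler_src h \<in> {1..n} \<and> handler_src h \<noteq> i)"

lemma pend_wf_source:
  "pend_wf n s \<Longrightarrow> i \<in> {1..n} \<Longrightarrow> h \<in># pend (procs s i) \<Longrightarrow> handler_src h \<in> {1..n} \<and> handler_src h \<noteq> i"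
  by (simp add: pend_wf_def)

lemma step_preserves_pend_wf:
  assumes "chan_wf n s" "pend_wf n s" "step n t w s a s'"
  shows "pend_wf n s'"
proof (cases a)
  case (Deliver src dst m)
  then show ?thesis
    using assms by (cases m) (fastforce simp: step_def chan_wf_def pend_wf_def Let_def upd_proc_def)+
next
  case (Exec i h)
  then have "pend (procs s' x) \<subseteq># pend (procs s x)" for x
    using assms(3) by (cases h) (auto simp: step_def Let_def)
  then show ?thesis
    using assms(2) by (fastforce simp: pend_wf_def dest: mset_subset_eqD)
qed (use assms in \<open>auto simp: step_def pend_wf_def Let_def upd_proc_def split: opstate.split\<close>)

lemma step_preserves_chan_wf:
  assumes "chan_wf n s" "pend_wf n s" "w \<in> {1..n}" "step n t w s a s'"
  shows "chan_wf n s'"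
proof (cases a)
  case (Deliver src dst m)
  then show ?thesis
    using assms by (cases m) (auto simp: step_def chan_wf_def Let_def upd_proc_def dest: in_diffD)
next
  case (Exec i h)
  then show ?thesis
    using assms
    by (cases h) (fastforce simp: step_def chan_wf_def pend_wf_def send_to_def Let_def split: if_splits)+
qed (use assms in \<open>auto simp: step_def chan_wf_def send_to_def Let_def upd_proc_def split: opstate.split\<close>)

definition write_action :: "'v action \<Rightarrow> bool" where
  "write_action a \<longleftrightarrow> (\<exists>v. a = InvWrite v) \<or> (\<exists>i j b v. a = Exec i (HWrite j b v))"

lemma step_sync_frame:
  assumes "step n t w s a s'" "\<not> write_action a"
  shows "sync s' x y = sync s x y"
  using assms by (cases a) (auto simp: step_def write_action_def Let_def upd_proc_def
      split: opstate.split msg.split handler.split)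

lemma step_in_transit_frame:
  assumes st: "step n t w s a s'" and nw: "\<not> write_action a"
  shows "in_transit s' p q = in_transit s p q"
proof (cases a)
  case (Deliver src dst m)
  then have mem: "(src, dst, m) \<in># chan s" and s': "s' = effect n t w s a"
    using st by (auto simp: step_def)
  show ?thesis
  proof (cases m)
    case (WriteM b v)
    define moved where "moved = (if src = p \<and> dst = q then {#b#} else {#})"
    have "moved \<subseteq># chan_bits (chan s) p q"
      using mem by (auto simp: moved_def WriteM dest!: multi_member_split)
    moreover have "in_transit s' p q =
        (chan_bits (chan s) p q - moved) + (moved + pend_bits (pend (procs s q)) p)"
      using chan_bits_remove[OF mem, of p q]
      by (auto simp: moved_def in_transit_def s' Deliver WriteM Let_def upd_proc_def)
    ultimately show ?thesis
      by (simp add: in_transit_def subset_mset.diff_add flip: union_assoc)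
  qed (use chan_bits_remove[OF mem, of p q] in \<open>auto simp: s' Deliver in_transit_def Let_def upd_proc_def\<close>)
next
  case (Exec i h)
  then obtain j sn where h: "h = HRead j sn" and "h \<in># pend (procs s i)" and s': "s' = effect n t w s a"
    using st nw by (cases h) (auto simp: step_def write_action_def)
  then show ?thesis
    using pend_bits_remove[of h "pend (procs s i)" p] by (auto simp: in_transit_def Exec Let_def)
qed (use st nw in \<open>auto simp: step_def write_action_def in_transit_def Let_def upd_proc_def split: opstate.split\<close>)

definition sync_windows :: "nat \<Rightarrow> 'v gstate \<Rightarrow> bool" where
  "sync_windows n s \<longleftrightarrow> (\<forall>a\<in>{1..n}. \<forall>b\<in>{1..n}. a \<noteq> b \<longrightarrow>
     sync_window (sync s a a) (sync s a b) (sync s b a) (in_transit s a b))"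

lemma sync_windowsD:
  "sync_windows n s \<Longrightarrow> a \<in> {1..n} \<Longrightarrow> b \<in> {1..n} \<Longrightarrow> a \<noteq> b \<Longrightarrow>
     sync_window (sync s a a) (sync s a b) (sync s b a) (in_transit s a b)"
  by (simp add: sync_windows_def)

definition sync_inv :: "nat \<Rightarrow> nat \<Rightarrow> 'v gstate \<Rightarrow> bool" where
  "sync_inv n w s \<longleftrightarrow> chan_wf n s \<and> pend_wf n s \<and> sync_windows n s \<and>
     (\<forall>a\<in>{1..n}. sync s a a \<le> sync s w w)"

lemma invwrite_preserves_sync_windows:
  assumes inv: "sync_inv n w s" and s': "s' = effect n t w s (InvWrite v)"
  shows "sync_windows n s' \<and> (\<forall>a\<in>{1..n}. sync s' a a \<le> sync s' w w)"
proof -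
  define A where "A = sync s w w"
  have sync': "sync s' x y = (if x = w \<and> y = w then Suc A else sync s x y)" for x y
    by (simp add: s' A_def Let_def)
  have transit': "in_transit s' a b = in_transit s a b +
      (if a = w \<and> b \<in> {1..n} \<and> b \<noteq> w \<and> sync s w b = A then {#Suc A mod 2#} else {#})" for a b
    by (auto simp: s' A_def Let_def in_transit_def)
  have "sync_window (sync s' a a) (sync s' a b) (sync s' b a) (in_transit s' a b)"
    if "a \<in> {1..n}" "b \<in> {1..n}" "a \<noteq> b" for a b
  proof -
    have old: "sync_window (sync s a a) (sync s a b) (sync s b a) (in_transit s a b)"
      using inv that by (auto simp: sync_inv_def sync_windows_def)
    show ?thesis
    proof (cases "a = w")
      case True
      then show ?thesis using sync_window_issue[OF old] that by (auto simp: sync' transit' A_def)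
    next
      case False
      then show ?thesis using old by (simp add: sync' transit')
    qed
  qed
  moreover have "\<forall>a\<in>{1..n}. sync s' a a \<le> sync s' w w"
    using inv by (auto simp: sync_inv_def sync' A_def le_SucI)
  ultimately show ?thesis by (simp add: sync_windows_def)
qed

lemma pending_write_in_transit: "HWrite j b v \<in># pend (procs s i) \<Longrightarrow> b \<in># in_transit s j i"
  by (force simp: in_transit_def pend_bits_def)

text \<open>
  The three branches of the write handler at p_i: it adopts the received value (c = A),
  sends p_j its next value (Suc c < A), or does neither.
\<close>

lemma exec_write_effect:
  fixes s :: "'v gstate" and n t w i j \<beta> :: nat and v :: 'v
  assumes "j \<noteq> i"
  defines "s' \<equiv> effect n t w s (Exec i (HWrite j \<beta> v))" and "c \<equiv> sync s i j" and "A \<equiv> sync s i i"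
  shows "sync s' x y =
      (if x = i \<and> y = j then Suc c else if x = i \<and> y = i \<and> c = A then Suc A else sync s x y)"
    and "chan s' = chan s +
      (if c = A then send_to i {l \<in> {1..n}. l \<noteq> i \<and> sync s i l = c} (WriteM (Suc c mod 2) v)
       else if Suc c < A then {#(i, j, WriteM (Suc (Suc c) mod 2) (hist (procs s i) (Suc (Suc c))))#}
       else {#})"
    and "pend (procs s' x) = (if x = i then pend (procs s i) - {#HWrite j \<beta> v#} else pend (procs s x))"
proof -
  have "{l \<in> {1..n}. ((wsync (procs s i))(i := Suc c)) l = c} = {l \<in> {1..n}. l \<noteq> i \<and> sync s i l = c}"
    by auto
  then show "chan s' = chan s +
      (if c = A then send_to i {l \<in> {1..n}. l \<noteq> i \<and> sync s i l = c} (WriteM (Suc c mod 2) v)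
       else if Suc c < A then {#(i, j, WriteM (Suc (Suc c) mod 2) (hist (procs s i) (Suc (Suc c))))#}
       else {#})"
    by (cases "c = A"; cases "Suc c < A") (simp_all add: s'_def c_def A_def Let_def)
qed (use assms in \<open>(cases "c = A"; cases "Suc c < A"; simp add: Let_def)+\<close>)

lemma exec_write_in_transit:
  fixes s :: "'v gstate" and n t w i j \<beta> :: nat and v :: 'v
  assumes h: "HWrite j \<beta> v \<in># pend (procs s i)" and ji: "j \<noteq> i"
  defines "s' \<equiv> effect n t w s (Exec i (HWrite j \<beta> v))" and "c \<equiv> sync s i j" and "A \<equiv> sync s i i"
  shows "in_transit s' j i = in_transit s j i - {#\<beta>#}"
    and "\<not> (a = j \<and> b = i) \<Longrightarrow> in_transit s' a b = in_transit s a b +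
      (if a = i \<and> b \<in> {1..n} \<and> b \<noteq> i \<and> c = A \<and> sync s i b = c then {#Suc c mod 2#}
       else if a = i \<and> b = j \<and> Suc c < A then {#Suc (Suc c) mod 2#} else {#})"
proof -
  note effect = exec_write_effect[OF ji, of n t w s \<beta> v, folded s'_def c_def A_def]
  have "chan_bits (chan s') j i = chan_bits (chan s) j i"
    using ji by (simp add: effect)
  moreover have "pend_bits (pend (procs s' i)) j = pend_bits (pend (procs s i)) j - {#\<beta>#}"
    using pend_bits_remove[OF h, of j] by (simp add: effect)
  moreover have "{#\<beta>#} \<subseteq># pend_bits (pend (procs s i)) j"
    using h by (force simp: pend_bits_def)
  ultimately show "in_transit s' j i = in_transit s j i - {#\<beta>#}"
    unfolding in_transit_def by (metis multiset_diff_union_assoc)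
  show "in_transit s' a b = in_transit s a b +
      (if a = i \<and> b \<in> {1..n} \<and> b \<noteq> i \<and> c = A \<and> sync s i b = c then {#Suc c mod 2#}
       else if a = i \<and> b = j \<and> Suc c < A then {#Suc (Suc c) mod 2#} else {#})"
    (is "_ = _ + ?sent") if "\<not> (a = j \<and> b = i)"
  proof -
    have "pend_bits (pend (procs s' b)) a = pend_bits (pend (procs s b)) a"
      using that pend_bits_remove[OF h, of a] by (simp add: effect)
    moreover have "chan_bits (chan s') a b = chan_bits (chan s) a b + ?sent"
      by (cases "c = A"; cases "Suc c < A") (auto simp: effect)
    ultimately show ?thesis
      by (simp add: in_transit_def)
  qed
qed

lemma exec_write_window:
  fixes s :: "'v gstate" and n t w i j \<beta> :: nat and v :: 'v
  assumes wf: "pend_wf n s" and windows: "sync_windows n s"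
    and i: "i \<in> {1..n}" and h: "HWrite j \<beta> v \<in># pend (procs s i)" and \<beta>: "\<beta> = Suc (sync s i j) mod 2"
    and ab: "a \<in> {1..n}" "b \<in> {1..n}" "a \<noteq> b"
  defines "s' \<equiv> effect n t w s (Exec i (HWrite j \<beta> v))"
  shows "sync_window (sync s' a a) (sync s' a b) (sync s' b a) (in_transit s' a b)"
proof -
  define c where "c = sync s i j"
  define A where "A = sync s i i"
  have j: "j \<in> {1..n}" "j \<noteq> i"
    using pend_wf_source[OF wf i h] by simp_all
  note sync' = exec_write_effect(1)[OF j(2), of n t w s \<beta> v, folded s'_def c_def A_def]
  note transit_ji = exec_write_in_transit(1)[OF h j(2), of n t w, folded s'_def]
  note transit' = exec_write_in_transit(2)[OF h j(2), of _ _ n t w, folded s'_def c_def A_def]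
  note old = sync_windowsD[OF windows ab]
  have c_le: "c \<le> A"
    using sync_windowsD[OF windows i j(1) j(2)[symmetric]] by (simp add: sync_window_def c_def A_def)
  \<comment> \<open>(j, i) loses the received write, (i, j) gains the acknowledgement, and every (i, b)
    gains the adopted write if p_i adopts it.\<close>
  consider "a = j" "b = i" | "a = i" "b = j" | "a = i" "b \<noteq> j" | "a \<noteq> i" "\<not> (a = j \<and> b = i)"
    using ab by blast
  then show ?thesis
  proof cases
    case 1
    then show ?thesis
      using sync_window_receive[OF old] pending_write_in_transit[OF h] j(2)
      by (simp add: sync' transit_ji c_def \<beta>)
  next
    case 2
    have old_ij: "sync_window A c (sync s j i) (in_transit s i j)"
      using old 2 by (simp add: c_def A_def)
    show ?thesis
    proof (cases "c = A")
      case True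
      from sync_window_ack[OF sync_window_issue[OF old_ij]] show ?thesis
        using 2 True j by (simp add: sync' transit' flip: c_def)
    next
      case False
      from sync_window_ack[OF old_ij] show ?thesis
        using 2 False c_le j by (simp add: sync' transit' flip: c_def A_def del: mod2_Suc_Suc)
    qed
  next
    case 3
    have old_ib: "sync_window A (sync s i b) (sync s b i) (in_transit s i b)"
      using old 3 by (simp add: A_def)
    show ?thesis
    proof (cases "c = A")
      case True
      from sync_window_issue[OF old_ib] show ?thesis
        using 3 True ab j(2) by (auto simp: sync' transit' split: if_split_asm)
    next
      case False
      from old show ?thesis
        using 3 False j(2) by (simp add: sync' transit')
    qed
  next
    case 4
    then show ?thesis
      using old by (auto simp: sync' transit')
  qed
qed

lemma exec_write_preserves_sync_windows:
  assumes inv: "sync_inv n w s" and i: "i \<in> {1..n}" and h: "HWrite j \<beta> v \<in># pend (procs s i)"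
    and \<beta>: "\<beta> = Suc (sync s i j) mod 2" and s': "s' = effect n t w s (Exec i (HWrite j \<beta> v))"
  shows "sync_windows n s' \<and> (\<forall>a\<in>{1..n}. sync s' a a \<le> sync s w w)"
proof -
  have wf: "pend_wf n s" and windows: "sync_windows n s"
    using inv by (simp_all add: sync_inv_def)
  have j: "j \<in> {1..n}" "j \<noteq> i"
    using pend_wf_source[OF wf i h] by simp_all
  have "sync s i j < sync s j j"
    using sync_window_receivable[OF sync_windowsD[OF windows j(1) i j(2)] pending_write_in_transit[OF h]]
    by simp
  moreover have "sync s j j \<le> sync s w w" "\<forall>a\<in>{1..n}. sync s a a \<le> sync s w w"
    using inv j(1) by (simp_all add: sync_inv_def)
  ultimately have "\<forall>a\<in>{1..n}. sync s' a a \<le> sync s w w"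
    unfolding s' exec_write_effect(1)[OF j(2)] by auto
  moreover have "sync_windows n s'"
    using exec_write_window[OF wf windows i h \<beta>] by (simp add: sync_windows_def s')
  ultimately show ?thesis
    by simp
qed

lemma step_sync_mono: "step n t w s a s' \<Longrightarrow> sync s x y \<le> sync s' x y"
  by (cases a) (auto simp: step_def Let_def upd_proc_def split: opstate.split msg.split handler.split)

lemma step_crashed_mono: "step n t w s a s' \<Longrightarrow> crashed (procs s x) \<Longrightarrow> crashed (procs s' x)"
  by (cases a) (auto simp: step_def Let_def upd_proc_def split: opstate.split msg.split handler.split)

lemma initial_sync_inv: "initial n v0 s \<Longrightarrow> sync_inv n w s"
  by (simp add: initial_def sync_inv_def chan_wf_def pend_wf_def sync_windows_def sync_window_def
      in_transit_def pend_bits_def seq_bits_def)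

lemma step_preserves_sync_inv:
  assumes inv: "sync_inv n w s" and w: "w \<in> {1..n}" and st: "step n t w s a s'"
  shows "sync_inv n w s'"
proof -
  have en: "enabled n t w s a" and s': "s' = effect n t w s a"
    using st unfolding step_def by blast+
  have wf: "chan_wf n s' \<and> pend_wf n s'"
    using step_preserves_chan_wf[OF _ _ w st] step_preserves_pend_wf[OF _ _ st] inv by (simp add: sync_inv_def)
  have "sync_windows n s' \<and> (\<forall>x\<in>{1..n}. sync s' x x \<le> sync s' w w)"
  proof (cases "write_action a")
    case True
    then consider v where "a = InvWrite v" | i j b v where "a = Exec i (HWrite j b v)"
      by (auto simp: write_action_def)
    then show ?thesis
    proof cases
      case 1
      then show ?thesis
        using invwrite_preserves_sync_windows[OF inv s'[unfolded 1]] by simp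
    next
      case 2
      then have "sync_windows n s' \<and> (\<forall>x\<in>{1..n}. sync s' x x \<le> sync s w w)"
        using exec_write_preserves_sync_windows[OF inv _ _ _ s'[unfolded 2]] en 2 by auto
      then show ?thesis
        using step_sync_mono[OF st, of w w] by fastforce
    qed
  next
    case False
    then show ?thesis
      using inv step_sync_frame[OF st] step_in_transit_frame[OF st]
      by (simp add: sync_inv_def sync_windows_def)
  qed
  with wf show ?thesis
    by (simp add: sync_inv_def)
qed

lemma step_keeps_writer_sync:
  assumes "sync_inv n w s" "w \<in> {1..n}" "step n t w s a s'" "\<forall>v. a \<noteq> InvWrite v"
  shows "sync s' w w = sync s w w"
proof (cases "write_action a")
  case True
  then obtain i j b v where a: "a = Exec i (HWrite j b v)"
    using assms(4) by (auto simp: write_action_def)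
  then have "sync s' w w \<le> sync s w w"
    using exec_write_preserves_sync_windows[OF assms(1)] assms(2,3) by (auto simp: step_def)
  then show ?thesis
    using step_sync_mono[OF assms(3)] by (meson le_antisym)
qed (use step_sync_frame[OF assms(3)] in simp)

section \<open>Liveness\<close>

lemma step_pend_persists:
  "step n t w s a s' \<Longrightarrow> h \<in># pend (procs s x) \<Longrightarrow> a \<noteq> Exec x h \<Longrightarrow> h \<in># pend (procs s' x)"
  by (cases a) (auto simp: step_def Let_def upd_proc_def in_diff_count split: opstate.split msg.split handler.split)

lemma step_chan_persists:
  "step n t w s a s' \<Longrightarrow> (p, q, m) \<in># chan s \<Longrightarrow> a \<noteq> Deliver p q m \<Longrightarrow> (p, q, m) \<in># chan s'"
  by (cases a) (auto simp: step_def Let_def upd_proc_def in_diff_count split: opstate.split msg.split handler.split)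

lemma deliver_write_pending:
  "step n t w s (Deliver p q (WriteM b v)) s' \<Longrightarrow> HWrite p b v \<in># pend (procs s' q)"
  by (auto simp: step_def Let_def upd_proc_def)

lemma exec_write_increments_sync:
  "step n t w s (Exec j (HWrite i b v)) s' \<Longrightarrow> i \<noteq> j \<Longrightarrow> sync s' j i = Suc (sync s j i)"
  by (simp add: step_def Let_def)

lemma step_write_op_persists:
  "step n t w s a s' \<Longrightarrow> op (procs s x) = WOp N \<Longrightarrow> a \<noteq> OpStep x \<Longrightarrow> op (procs s' x) = WOp N"
  by (cases a) (auto simp: step_def Let_def upd_proc_def split: opstate.split msg.split handler.split)

lemma opstep_completes_write:
  "step n t w s (OpStep x) s' \<Longrightarrow> op (procs s x) = WOp N \<Longrightarrow> op (procs s' x) = NoOp"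
  by (auto simp: step_def upd_proc_def)

lemma invwrite_starts_write:
  "step n t w s (InvWrite v) s' \<Longrightarrow>
     op (procs s' w) = WOp (Suc (sync s w w)) \<and> sync s' w w = Suc (sync s w w)"
  by (simp add: step_def Let_def)

lemma in_transit_cases:
  "b \<in># in_transit s i j \<Longrightarrow> (\<exists>v. (i, j, WriteM b v) \<in># chan s) \<or> (\<exists>v. HWrite i b v \<in># pend (procs s j))"
proof -
  assume "b \<in># in_transit s i j"
  then consider m where "(i, j, m) \<in># chan s" "b \<in># write_bit m"
    | h where "h \<in># pend (procs s j)" "b \<in># handler_bit i h"
    by (auto simp: in_transit_def chan_bits_def pend_bits_def split: if_splits)
  then show ?thesis
  proof cases
    case 1
    then show ?thesis by (cases m) auto
  next
    case 2
    then show ?thesis by (cases h) (auto split: if_splits)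
  qed
qed

lemma bounded_mono_eventually_const:
  fixes f :: "nat \<Rightarrow> nat"
  assumes "mono f" and "\<forall>\<^sub>F k in sequentially. f k \<le> B"
  shows "\<exists>c. \<forall>\<^sub>F k in sequentially. f k = c"
proof -
  obtain k0 where bound: "\<And>k. k0 \<le> k \<Longrightarrow> f k \<le> B"
    using assms(2) by (auto simp: eventually_sequentially)
  have "finite (f ` {k0..})"
    using bound by (auto intro: finite_subset[of _ "{..B}"])
  then obtain T where T: "T \<ge> k0" "f T = Max (f ` {k0..})"
    using Max_in[of "f ` {k0..}"] by fastforce
  have "f k = f T" if "T \<le> k" for k
  proof (rule antisym)
    show "f k \<le> f T"
      using that T Max_ge[OF \<open>finite _\<close>, of "f k"] by simp
    show "f T \<le> f k"
      using \<open>mono f\<close> that by (rule monoD)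
  qed
  then show ?thesis
    unfolding eventually_sequentially by blast
qed

definition correct :: "nat \<Rightarrow> (nat \<Rightarrow> 'v gstate) \<Rightarrow> nat set" where
  "correct n \<sigma> = {1..n} - faulty n \<sigma>"

lemma card_correct:
  assumes "card (faulty n \<sigma>) \<le> t"
  shows "n - t \<le> card (correct n \<sigma>)"
proof -
  have "faulty n \<sigma> \<subseteq> {1..n}"
    by (auto simp: faulty_def)
  then have "card (correct n \<sigma>) = n - card (faulty n \<sigma>)"
    by (simp add: correct_def card_Diff_subset finite_subset)
  with assms show ?thesis
    by simp
qed

lemma opstep_enabled_by_quorum:
  assumes "w \<in> {1..n}" "\<not> crashed (procs s w)" "op (procs s w) = WOp N" "card (faulty n \<sigma>) \<le> t"
    and synced: "\<forall>j\<in>correct n \<sigma>. sync s w j = N"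
  shows "enabled n t w s (OpStep w)"
proof -
  have "correct n \<sigma> \<subseteq> {j \<in> {1..n}. sync s w j = N}"
    using synced by (auto simp: correct_def)
  then have "card (correct n \<sigma>) \<le> card {j \<in> {1..n}. sync s w j = N}"
    by (rule card_mono[rotated]) simp
  with card_correct[OF assms(4)] assms(1-3) show ?thesis
    by simp
qed

locale fair_run =
  fixes n t w :: nat and v0 :: 'v and \<sigma> :: "nat \<Rightarrow> 'v gstate" and act :: "nat \<Rightarrow> 'v action"
  assumes run: "is_run n t w v0 \<sigma> act"
    and fair: "weakly_fair n t w \<sigma> act"
    and writer: "w \<in> {1..n}"
begin

lemma step_at: "step n t w (\<sigma> k) (act k) (\<sigma> (Suc k))"
  using run by (simp add: is_run_def)

lemma sync_inv_at: "sync_inv n w (\<sigma> k)"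
proof (induction k)
  case 0
  show ?case
    using run initial_sync_inv by (auto simp: is_run_def)
next
  case (Suc k)
  then show ?case
    using step_preserves_sync_inv[OF _ writer step_at] by blast
qed

lemma sync_window_at:
  "a \<in> {1..n} \<Longrightarrow> b \<in> {1..n} \<Longrightarrow> a \<noteq> b \<Longrightarrow>
     sync_window (sync (\<sigma> k) a a) (sync (\<sigma> k) a b) (sync (\<sigma> k) b a) (in_transit (\<sigma> k) a b)"
  using sync_inv_at[of k] sync_windowsD[of n "\<sigma> k" a b] by (simp add: sync_inv_def)

lemma mono_sync: "mono (\<lambda>k. sync (\<sigma> k) x y)"
  using step_sync_mono[OF step_at] by (simp add: mono_iff_le_Suc)

lemma crashed_persists: "k \<le> k' \<Longrightarrow> crashed (procs (\<sigma> k) x) \<Longrightarrow> crashed (procs (\<sigma> k') x)"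
  by (induction k' rule: dec_induct) (auto intro: step_crashed_mono[OF step_at])

lemma correct_alive: "j \<in> correct n \<sigma> \<Longrightarrow> \<not> crashed (procs (\<sigma> k) j)"
  by (auto simp: correct_def faulty_def)

lemma eventually_taken:
  assumes a: "fair_action a" and start: "P (\<sigma> T)"
    and keep: "\<And>k. T \<le> k \<Longrightarrow> P (\<sigma> k) \<Longrightarrow> act k \<noteq> a \<Longrightarrow> P (\<sigma> (Suc k))"
    and en: "\<And>k. T \<le> k \<Longrightarrow> P (\<sigma> k) \<Longrightarrow> enabled n t w (\<sigma> k) a"
  shows "\<exists>k\<ge>T. act k = a"
proof (rule ccontr)
  assume never: "\<not> (\<exists>k\<ge>T. act k = a)"
  have "P (\<sigma> k)" if "T \<le> k" for k
    using that by (induction k rule: dec_induct) (use start keep never in auto)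
  then have "\<forall>k\<ge>T. enabled n t w (\<sigma> k) a"
    using en by blast
  with fair a never show False
    unfolding weakly_fair_def by blast
qed

lemma message_delivered:
  assumes "(i, j, m) \<in># chan (\<sigma> T)" and "\<forall>k. \<not> crashed (procs (\<sigma> k) j)"
  shows "\<exists>k\<ge>T. act k = Deliver i j m"
  by (rule eventually_taken[where P = "\<lambda>s. (i, j, m) \<in># chan s"])
    (use assms step_chan_persists[OF step_at] in auto)

lemma pending_write_executed:
  assumes "HWrite i b v \<in># pend (procs (\<sigma> T) j)" and "j \<in> {1..n}" "\<forall>k. \<not> crashed (procs (\<sigma> k) j)"
    and expected: "\<And>k. T \<le> k \<Longrightarrow> b = Suc (sync (\<sigma> k) j i) mod 2"
  shows "\<exists>k\<ge>T. act k = Exec j (HWrite i b v)"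
  by (rule eventually_taken[where P = "\<lambda>s. HWrite i b v \<in># pend (procs s j)"])
    (use assms step_pend_persists[OF step_at] in auto)

lemma in_transit_bit_received:
  assumes j: "j \<in> {1..n}" "\<forall>k. \<not> crashed (procs (\<sigma> k) j)" and ij: "i \<noteq> j"
    and bit: "Suc (sync (\<sigma> T) j i) mod 2 \<in># in_transit (\<sigma> T) i j"
  shows "\<exists>k\<ge>T. sync (\<sigma> k) j i \<noteq> sync (\<sigma> T) j i"
proof (rule ccontr)
  define d where "d = sync (\<sigma> T) j i"
  define \<beta> where "\<beta> = Suc d mod 2"
  assume "\<not> (\<exists>k\<ge>T. sync (\<sigma> k) j i \<noteq> sync (\<sigma> T) j i)"
  then have stable: "\<And>k. T \<le> k \<Longrightarrow> sync (\<sigma> k) j i = d"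
    unfolding d_def by blast
  have never_pending: False if pending: "HWrite i \<beta> v \<in># pend (procs (\<sigma> T') j)" and "T \<le> T'" for v T'
  proof -
    obtain k where k: "T' \<le> k" "act k = Exec j (HWrite i \<beta> v)"
      using pending_write_executed[OF pending j] stable \<open>T \<le> T'\<close> by (fastforce simp: \<beta>_def)
    then have "sync (\<sigma> (Suc k)) j i = Suc (sync (\<sigma> k) j i)"
      using exec_write_increments_sync step_at[of k] ij by metis
    then show False
      using stable[of k] stable[of "Suc k"] k(1) \<open>T \<le> T'\<close> by simp
  qed
  from in_transit_cases[OF bit[folded d_def \<beta>_def]] show False
  proof
    assume "\<exists>v. (i, j, WriteM \<beta> v) \<in># chan (\<sigma> T)"
    then obtain v k where "T \<le> k" "act k = Deliver i j (WriteM \<beta> v)"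
      using message_delivered j(2) by blast
    then show False
      using deliver_write_pending step_at[of k] never_pending[of v "Suc k"] by fastforce
  qed (use never_pending in blast)
qed

lemma stable_link_synced:
  assumes j: "j \<in> {1..n}" "j \<noteq> w" "\<forall>k. \<not> crashed (procs (\<sigma> k) j)"
    and alive: "\<forall>k. \<not> crashed (procs (\<sigma> k) w)"
    and stable: "\<forall>k\<ge>T. sync (\<sigma> k) w j = c \<and> sync (\<sigma> k) j w = d"
  shows "c = sync (\<sigma> T) w w"
proof (rule ccontr)
  assume "c \<noteq> sync (\<sigma> T) w w"
  have wj: "sync_window (sync (\<sigma> T) w w) c d (in_transit (\<sigma> T) w j)"
    using sync_window_at[OF writer j(1) j(2)[symmetric], of T] stable by simp
  have jw: "sync_window (sync (\<sigma> T) j j) d c (in_transit (\<sigma> T) j w)"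
    using sync_window_at[OF j(1) writer j(2), of T] stable by simp
  have "d < min (sync (\<sigma> T) w w) (Suc c) \<or> c < min (sync (\<sigma> T) j j) (Suc d)"
    using wj jw \<open>c \<noteq> _\<close> by (auto simp: sync_window_def)
  then show False
  proof
    assume "d < min (sync (\<sigma> T) w w) (Suc c)"
    then have "Suc (sync (\<sigma> T) j w) mod 2 \<in># in_transit (\<sigma> T) w j"
      using sync_window_next_bit[OF wj] stable by simp
    then obtain k where "T \<le> k" "sync (\<sigma> k) j w \<noteq> sync (\<sigma> T) j w"
      using in_transit_bit_received[OF j(1,3) j(2)[symmetric]] by blast
    then show False
      using stable by simp
  next
    assume "c < min (sync (\<sigma> T) j j) (Suc d)"
    then have "Suc (sync (\<sigma> T) w j) mod 2 \<in># in_transit (\<sigma> T) j w"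
      using sync_window_next_bit[OF jw] stable by simp
    then obtain k where "T \<le> k" "sync (\<sigma> k) w j \<noteq> sync (\<sigma> T) w j"
      using in_transit_bit_received[OF writer alive j(2)] by blast
    then show False
      using stable by simp
  qed
qed

lemma writer_sync_converges:
  assumes j: "j \<in> correct n \<sigma>" and alive: "\<forall>k. \<not> crashed (procs (\<sigma> k) w)"
    and stuck: "\<forall>\<^sub>F k in sequentially. sync (\<sigma> k) w w = N"
  shows "\<forall>\<^sub>F k in sequentially. sync (\<sigma> k) w j = N"
proof (cases "j = w")
  case True
  with stuck show ?thesis
    by simp
next
  case False
  have jn: "j \<in> {1..n}"
    using j by (simp add: correct_def)
  have "sync (\<sigma> k) w j \<le> sync (\<sigma> k) w w" "sync (\<sigma> k) j w \<le> sync (\<sigma> k) w w" for k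
    using sync_window_at[OF writer jn False[symmetric], of k] by (simp_all add: sync_window_def)
  with stuck have "\<forall>\<^sub>F k in sequentially. sync (\<sigma> k) w j \<le> N"
      and "\<forall>\<^sub>F k in sequentially. sync (\<sigma> k) j w \<le> N"
    by (auto elim: eventually_mono)
  then obtain c d where "\<forall>\<^sub>F k in sequentially. sync (\<sigma> k) w j = c"
      and "\<forall>\<^sub>F k in sequentially. sync (\<sigma> k) j w = d"
    using bounded_mono_eventually_const[OF mono_sync] by blast
  with stuck have "\<forall>\<^sub>F k in sequentially. sync (\<sigma> k) w w = N \<and> sync (\<sigma> k) w j = c \<and> sync (\<sigma> k) j w = d"
    by eventually_elim simp
  then obtain T where T: "\<forall>k\<ge>T. sync (\<sigma> k) w w = N \<and> sync (\<sigma> k) w j = c \<and> sync (\<sigma> k) j w = d"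
    unfolding eventually_sequentially by blast
  then have "c = N"
    using stable_link_synced[OF jn False correct_alive[OF j, THEN allI] alive, of T c d] by simp
  with T show ?thesis
    unfolding eventually_sequentially by blast
qed

lemma writer_alive:
  assumes invoked: "act k = InvWrite v" and pending: "\<forall>k'>k. op (procs (\<sigma> k') w) \<noteq> NoOp"
    and crash: "\<forall>k'>k. crashed (procs (\<sigma> k') w) \<longrightarrow> (\<exists>k''\<in>{k<..k'}. op (procs (\<sigma> k'') w) = NoOp)"
  shows "\<not> crashed (procs (\<sigma> k') w)"
proof (cases "k' \<le> k")
  case True
  have "\<not> crashed (procs (\<sigma> k) w)"
    using step_at[of k] invoked by (simp add: step_def)
  then show ?thesis
    using crashed_persists[OF True] by blast
next
  case False
  then show ?thesis
    using crash pending by fastforce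
qed

lemma write_pending_forever:
  assumes invoked: "act k = InvWrite v" and pending: "\<forall>k'>k. op (procs (\<sigma> k') w) \<noteq> NoOp"
    and "k < k'"
  shows "op (procs (\<sigma> k') w) = WOp (Suc (sync (\<sigma> k) w w)) \<and> sync (\<sigma> k') w w = Suc (sync (\<sigma> k) w w)"
  using Suc_leI[OF \<open>k < k'\<close>]
proof (induction k' rule: dec_induct)
  case base
  show ?case
    using invwrite_starts_write step_at[of k] invoked by metis
next
  case (step m)
  note IH = step.IH and st = step_at[of m]
  have "act m \<noteq> OpStep w"
    using opstep_completes_write[of n t w "\<sigma> m" w] st IH pending step.hyps by fastforce
  moreover have "\<forall>v. act m \<noteq> InvWrite v"
    using st IH by (auto simp: step_def)
  ultimately show ?case
    using step_write_op_persists[OF st] step_keeps_writer_sync[OF sync_inv_at writer st] IH by simp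
qed

lemma writer_eventually_returns:
  assumes alive: "\<forall>k. \<not> crashed (procs (\<sigma> k) w)" and faulty: "card (faulty n \<sigma>) \<le> t"
    and writing: "\<forall>k'>k. op (procs (\<sigma> k') w) = WOp N \<and> sync (\<sigma> k') w w = N"
  shows "\<exists>k'>k. act k' = OpStep w"
proof -
  have "\<forall>\<^sub>F k' in sequentially. sync (\<sigma> k') w w = N"
    using writing by (intro eventually_sequentiallyI[of "Suc k"]) simp
  then have "\<forall>\<^sub>F k' in sequentially. sync (\<sigma> k') w j = N" if "j \<in> correct n \<sigma>" for j
    using writer_sync_converges[OF that alive] by blast
  then have "\<forall>\<^sub>F k' in sequentially. k < k' \<and> (\<forall>j\<in>correct n \<sigma>. sync (\<sigma> k') w j = N)"
    by (intro eventually_conj eventually_gt_at_top eventually_ball_finite) (auto simp: correct_def)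
  then obtain K where K: "\<And>k'. K \<le> k' \<Longrightarrow> k < k' \<and> (\<forall>j\<in>correct n \<sigma>. sync (\<sigma> k') w j = N)"
    unfolding eventually_sequentially by blast
  have "\<forall>k'\<ge>K. enabled n t w (\<sigma> k') (OpStep w)"
    using opstep_enabled_by_quorum[OF writer alive[rule_format] _ faulty] writing K by blast
  then obtain k' where "K \<le> k'" "act k' = OpStep w"
    using fair unfolding weakly_fair_def by (metis fair_action.simps(3))
  with K show ?thesis
    by blast
qed

end

theorem lemma8:
  fixes n t w :: nat and v0 :: 'v
    and \<sigma> :: "nat \<Rightarrow> 'v gstate" and act :: "nat \<Rightarrow> 'v action"
  assumes "2 * t < n"
    and "w \<in> {1..n}"
    and "is_run n t w v0 \<sigma> act"
    and "weakly_fair n t w \<sigma> act"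
    and "card (faulty n \<sigma>) \<le> t"
    and "act k = InvWrite v"
    and "\<forall>k'>k. crashed (procs (\<sigma> k') w) \<longrightarrow> (\<exists>k''\<in>{k<..k'}. op (procs (\<sigma> k'') w) = NoOp)"
  shows "\<exists>k'>k. op (procs (\<sigma> k') w) = NoOp"
proof (rule ccontr)
  interpret fair_run n t w v0 \<sigma> act
    using assms(2-4) by unfold_locales
  define N where "N = Suc (sync (\<sigma> k) w w)"
  assume "\<not> (\<exists>k'>k. op (procs (\<sigma> k') w) = NoOp)"
  then have pending: "\<forall>k'>k. op (procs (\<sigma> k') w) \<noteq> NoOp"
    by blast
  have writing: "\<forall>k'>k. op (procs (\<sigma> k') w) = WOp N \<and> sync (\<sigma> k') w w = N"
    using write_pending_forever[OF assms(6) pending] by (simp add: N_def)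
  have "\<forall>k'. \<not> crashed (procs (\<sigma> k') w)"
    using writer_alive[OF assms(6) pending assms(7)] by blast
  then obtain k' where "k < k'" "act k' = OpStep w"
    using writer_eventually_returns[OF _ assms(5) writing] by blast
  then have "op (procs (\<sigma> (Suc k')) w) = NoOp"
    using opstep_completes_write[of n t w "\<sigma> k'" w _ N] step_at[of k'] writing by simp
  with pending \<open>k < k'\<close> show False
    by (meson less_SucI)
qed

end
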